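(* Let $1<\beta<\beta^*$, $L,L^*,\rho>0$, $\bar f\in\mathcal F(\beta^*,L^*,\rho)$ and $r>0$. Set $\gamma_\varepsilon=1/\log\varepsilon^{-2}$, $W_\varepsilon=\Big(\frac{L}{\varepsilon^2}\frac{(\beta+2)(2\beta+1)}{(2\pi)^{2\beta}(\beta-1)}\Big)^{1/(2\beta+1)}$, and define the filter $\lambda^*_k=1$ if $k\le\gamma_\varepsilon W_\varepsilon$ and $\lambda^*_k=\big[1-(k/W_\varepsilon)^{\beta-1}\big]_+$ if $k>\gamma_\varepsilon W_\varepsilon$. Then, as $\varepsilon\to0$, $$\sup_{f\in\mathcal F_{r,\beta,L}(\bar f)}R^\varepsilon[f,\lambda^*]\le(1+o(1))\,C(\beta,L)\,\varepsilon^{\frac{4\beta-4}{2\beta+1}},$$ with $C(\beta,L)=\frac13\Big(\frac{\beta-1}{2\pi(\beta+2)}\Big)^{\frac{2\beta-2}{2\beta+1}}\big(L(2\beta+1)\big)^{\frac3{2\beta+1}}$.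
   Context: For an even $1$-periodic locally square integrable $g$, $g_k=\sqrt2\int_{-1/2}^{1/2}\cos(2\pi kt)g(t)dt$ and $\|g^{(\beta)}\|^2=\sum_{k\ge1}(2\pi k)^{2\beta}g_k^2$. $R^\varepsilon[f,h]=\sum_{k\ge1}(2\pi k)^2[(1-h_k)^2f_k^2+\varepsilon^2h_k^2]$ for a sequence $h\in[0,1]^{\mathbb N}$. $\mathcal F_0(\rho)$: locally square integrable, even, $1$-periodic $f$ with $|\int_{-1/2}^{1/2}f(t)\cos(2\pi t)dt|\ge\rho$; $\mathcal F(\beta^*,L^*,\rho)=\{f\in\mathcal F_0(\rho):\|f^{(\beta^* )}\|\le L^*\}$. $\mathcal F_{r,\beta,L}(\bar f)=\{\bar f+v:\ v\text{ even, 1-periodic},\ \sum_kv_k^2\le r^2,\ \sum_k(2\pi k)^{2\beta}v_k^2\le L\}$. *)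

theory Defs
  imports "HOL-Analysis.Analysis"
begin

definition even_fun :: "(real \<Rightarrow> real) \<Rightarrow> bool" where
  "even_fun g \<longleftrightarrow> (\<forall>t. g (- t) = g t)"

definition periodic1 :: "(real \<Rightarrow> real) \<Rightarrow> bool" where
  "periodic1 g \<longleftrightarrow> (\<forall>t. g (t + 1) = g t)"

definition loc_sq_int :: "(real \<Rightarrow> real) \<Rightarrow> bool" where
  "loc_sq_int g \<longleftrightarrow> g \<in> borel_measurable lborel \<and>
     (\<forall>a b. set_integrable lborel {a..b} (\<lambda>t. (g t)^2))"

definition coef :: "(real \<Rightarrow> real) \<Rightarrow> nat \<Rightarrow> real" where
  "coef g k = sqrt 2 * (LINT t:{-1/2..1/2}|lborel. cos (2 * pi * real k * t) * g t)"

definition sob_sq :: "real \<Rightarrow> (real \<Rightarrow> real) \<Rightarrow> ennreal" where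
  "sob_sq \<beta> g = (\<Sum>k. ennreal ((2 * pi * real (Suc k)) powr (2 * \<beta>) * (coef g (Suc k))^2))"

definition l2_sq :: "(real \<Rightarrow> real) \<Rightarrow> ennreal" where
  "l2_sq g = (\<Sum>k. ennreal ((coef g (Suc k))^2))"

definition risk :: "real \<Rightarrow> (real \<Rightarrow> real) \<Rightarrow> (nat \<Rightarrow> real) \<Rightarrow> ennreal" where
  "risk \<epsilon> f h = (\<Sum>k. ennreal ((2 * pi * real (Suc k))^2 *
      ((1 - h (Suc k))^2 * (coef f (Suc k))^2 + \<epsilon>^2 * (h (Suc k))^2)))"

definition F0 :: "real \<Rightarrow> (real \<Rightarrow> real) set" where
  "F0 \<rho> = {f. loc_sq_int f \<and> even_fun f \<and> periodic1 f \<and>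
     \<bar>LINT t:{-1/2..1/2}|lborel. f t * cos (2 * pi * t)\<bar> \<ge> \<rho>}"

text \<open>F(beta*,L*,rho): the condition ||f^(beta*)|| <= L* is written as
  the squared seminorm being <= L*^2.\<close>

definition Fclass :: "real \<Rightarrow> real \<Rightarrow> real \<Rightarrow> (real \<Rightarrow> real) set" where
  "Fclass \<beta>s Ls \<rho> = {f \<in> F0 \<rho>. sob_sq \<beta>s f \<le> ennreal (Ls^2)}"

definition Fball :: "real \<Rightarrow> real \<Rightarrow> real \<Rightarrow> (real \<Rightarrow> real) \<Rightarrow> (real \<Rightarrow> real) set" where
  "Fball r \<beta> L fbar = {(\<lambda>t. fbar t + v t) | v. loc_sq_int v \<and> even_fun v \<and> periodic1 v \<and>
     l2_sq v \<le> ennreal (r^2) \<and> sob_sq \<beta> v \<le> ennreal L}"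

definition gamma_eps :: "real \<Rightarrow> real" where
  "gamma_eps \<epsilon> = 1 / ln (\<epsilon> powr (-2))"

definition W_eps :: "real \<Rightarrow> real \<Rightarrow> real \<Rightarrow> real" where
  "W_eps \<beta> L \<epsilon> = (L / \<epsilon>^2 * ((\<beta> + 2) * (2 * \<beta> + 1)) / ((2 * pi) powr (2 * \<beta>) * (\<beta> - 1)))
      powr (1 / (2 * \<beta> + 1))"

definition lam_star :: "real \<Rightarrow> real \<Rightarrow> real \<Rightarrow> nat \<Rightarrow> real" where
  "lam_star \<beta> L \<epsilon> k = (if real k \<le> gamma_eps \<epsilon> * W_eps \<beta> L \<epsilon> then 1
      else max 0 (1 - (real k / W_eps \<beta> L \<epsilon>) powr (\<beta> - 1)))"

definition C_const :: "real \<Rightarrow> real \<Rightarrow> real" where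
  "C_const \<beta> L = 1/3 * ((\<beta> - 1) / (2 * pi * (\<beta> + 2))) powr ((2 * \<beta> - 2) / (2 * \<beta> + 1))
      * (L * (2 * \<beta> + 1)) powr (3 / (2 * \<beta> + 1))"

end

theory Submission
  imports Defs "HOL-Real_Asymp.Real_Asymp"
begin

text \<open>
  Write f = fbar + v and split the risk into bias and variance. Below the cut-off \<gamma>W the
  filter is 1 and causes no bias; above it (1 - \<lambda>(k))^2 \<le> (k/W)^(2\<beta>-2), so the bias of v
  costs at most (1 + \<eta>) L (2\<pi>W)^(2-2\<beta>), while the smoother fbar (\<beta>* > \<beta>) only enters
  with the extra factor (2\<pi>\<gamma>W)^(2\<beta>-2\<beta>*), which tends to 0 because \<gamma>W \<rightarrow> \<infinity>.
  The variance, \<epsilon>^2 times the sum of (2\<pi>k)^2 \<lambda>(k)^2 over k \<le> W, is compared with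
  \<epsilon>^2 times the integral of (2\<pi>x)^2 (1 - (x/W)^(\<beta>-1))^2 over [0, W], which is
  \<epsilon>^2 (2\<pi>)^2 W^3 2(\<beta>-1)^2/(3(\<beta>+2)(2\<beta>+1)), up to O(W^2) and the (\<gamma>W)^3 coming from
  the flat part of the filter.
  The bandwidth W is chosen so that this main variance term equals (2\<beta>-2)/3 L (2\<pi>W)^(2-2\<beta>);
  added to the bias L (2\<pi>W)^(2-2\<beta>) it gives (2\<beta>+1)/3 L (2\<pi>W)^(2-2\<beta>),
  which is exactly C(\<beta>,L) \<epsilon>^((4\<beta>-4)/(2\<beta>+1)).
\<close>

section \<open>Fourier coefficients and the bias--variance split\<close>

lemma abs_le_one_plus_sq: "\<bar>x::real\<bar> \<le> 1 + x^2"
proof (cases "\<bar>x\<bar> \<le> 1")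
  case False
  then have "\<bar>x\<bar> * 1 \<le> \<bar>x\<bar> * \<bar>x\<bar>" by (intro mult_left_mono) auto
  then show ?thesis by (simp add: power2_eq_square)
qed (simp add: add_increasing2)

lemma loc_sq_int_cos_mult_integrable:
  assumes "loc_sq_int g"
  shows "set_integrable lborel {-1/2..1/2::real} (\<lambda>t. cos (2 * pi * real k * t) * g t)"
proof (rule set_integrable_bound)
  have "g \<in> borel_measurable lborel" using assms unfolding loc_sq_int_def by simp
  then show "set_borel_measurable lborel {-1/2..1/2} (\<lambda>t. cos (2 * pi * real k * t) * g t)"
    unfolding set_borel_measurable_def by measurable
  have "set_integrable lborel {-1/2..1/2::real} (\<lambda>t. 1::real)"
    by (rule borel_integrable_atLeastAtMost') (rule continuous_on_const)
  then show "set_integrable lborel {-1/2..1/2} (\<lambda>t. 1 + (g t)^2)"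
    using assms unfolding loc_sq_int_def by (intro set_integral_add(1)) auto
  have "norm (cos (2 * pi * real k * t) * g t) \<le> norm (1 + (g t)^2)" for t
  proof -
    have "\<bar>cos (2 * pi * real k * t)\<bar> * \<bar>g t\<bar> \<le> 1 * \<bar>g t\<bar>"
      by (intro mult_right_mono) auto
    then show ?thesis using abs_le_one_plus_sq[of "g t"] by (simp add: abs_mult)
  qed
  then show "AE t in lborel. t \<in> {-1/2..1/2} \<longrightarrow>
      norm (cos (2 * pi * real k * t) * g t) \<le> norm (1 + (g t)^2)"
    by simp
qed

lemma coef_add:
  assumes "loc_sq_int a" "loc_sq_int b"
  shows "coef (\<lambda>t. a t + b t) k = coef a k + coef b k"
  using set_integral_add(2)[OF loc_sq_int_cos_mult_integrable[OF assms(1)]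
      loc_sq_int_cos_mult_integrable[OF assms(2)]]
  by (simp add: coef_def distrib_left)

definition bias_risk :: "(real \<Rightarrow> real) \<Rightarrow> (nat \<Rightarrow> real) \<Rightarrow> ennreal" where
  "bias_risk f h =
    (\<Sum>k. ennreal ((2 * pi * real (Suc k))^2 * ((1 - h (Suc k))^2 * (coef f (Suc k))^2)))"

definition var_risk :: "real \<Rightarrow> (nat \<Rightarrow> real) \<Rightarrow> ennreal" where
  "var_risk \<epsilon> h = (\<Sum>k. ennreal ((2 * pi * real (Suc k))^2 * (\<epsilon>^2 * (h (Suc k))^2)))"

lemma risk_eq_bias_risk_plus_var_risk: "risk \<epsilon> f h = bias_risk f h + var_risk \<epsilon> h"
  unfolding risk_def bias_risk_def var_risk_def
  by (subst suminf_add) (auto simp: distrib_left)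

lemma var_risk_eq_sum:
  assumes "\<And>k. n < k \<Longrightarrow> h k = 0"
  shows "var_risk \<epsilon> h = ennreal (\<Sum>k<n. (2 * pi * real (Suc k))^2 * (\<epsilon>^2 * (h (Suc k))^2))"
proof -
  have "var_risk \<epsilon> h = (\<Sum>k<n. ennreal ((2 * pi * real (Suc k))^2 * (\<epsilon>^2 * (h (Suc k))^2)))"
    unfolding var_risk_def by (rule suminf_finite) (auto simp: assms)
  then show ?thesis by simp
qed

section \<open>The tapered filter\<close>

definition pinsker_taper :: "real \<Rightarrow> real \<Rightarrow> real \<Rightarrow> real" where
  "pinsker_taper \<beta> W x = 1 - (x / W) powr (\<beta> - 1)"

definition pinsker_filter :: "real \<Rightarrow> real \<Rightarrow> real \<Rightarrow> nat \<Rightarrow> real" where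
  "pinsker_filter \<beta> W \<gamma> k =
    (if real k \<le> \<gamma> * W then 1 else max 0 (pinsker_taper \<beta> W (real k)))"

lemma lam_star_eq_pinsker_filter:
  "lam_star \<beta> L \<epsilon> = pinsker_filter \<beta> (W_eps \<beta> L \<epsilon>) (gamma_eps \<epsilon>)"
  by (simp add: fun_eq_iff lam_star_def pinsker_filter_def pinsker_taper_def)

lemma pinsker_taper_le_one: "pinsker_taper \<beta> W x \<le> 1"
  by (simp add: pinsker_taper_def)

lemma pinsker_taper_antimono:
  assumes "1 < \<beta>" "0 < W" "0 \<le> x" "x \<le> y"
  shows "pinsker_taper \<beta> W y \<le> pinsker_taper \<beta> W x"
  using assms by (simp add: pinsker_taper_def powr_mono2 divide_right_mono)

lemma pinsker_taper_nonneg: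
  assumes "1 < \<beta>" "0 < W" "0 \<le> x" "x \<le> W"
  shows "0 \<le> pinsker_taper \<beta> W x"
  using assms by (simp add: pinsker_taper_def powr_le1)

lemma pinsker_filter_eq_0:
  assumes "1 < \<beta>" "0 < W" "\<gamma> < 1" "W < real k"
  shows "pinsker_filter \<beta> W \<gamma> k = 0"
proof -
  have "\<gamma> * W < W" using assms by simp
  then have "\<not> real k \<le> \<gamma> * W" using assms by linarith
  moreover have "1 < (real k / W) powr (\<beta> - 1)"
    using assms by (intro gr_one_powr) auto
  ultimately show ?thesis by (simp add: pinsker_filter_def pinsker_taper_def)
qed

lemma sq_mult_pinsker_filter_sq_le:
  assumes "1 < \<beta>" "0 < W" "real k \<le> W"
  shows "(real k)^2 * (pinsker_filter \<beta> W \<gamma> k)^2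
    \<le> (real k)^2 * (pinsker_taper \<beta> W (real k))^2 + (if real k \<le> \<gamma> * W then (real k)^2 else 0)"
  using pinsker_taper_nonneg[OF assms(1,2) _ assms(3)] by (simp add: pinsker_filter_def)

lemma one_minus_pinsker_filter_sq_le:
  assumes "\<gamma> * W < real k"
  shows "(1 - pinsker_filter \<beta> W \<gamma> k)^2 \<le> (real k / W) powr (2 * \<beta> - 2)"
proof -
  define u where "u = (real k / W) powr (\<beta> - 1)"
  have "(real k / W) powr (2 * \<beta> - 2) = u^2"
    by (simp add: u_def power2_eq_square powr_add[symmetric])
  moreover have "(1 - pinsker_filter \<beta> W \<gamma> k)^2 \<le> u^2"
    using assms by (simp add: pinsker_filter_def pinsker_taper_def u_def[symmetric] max_def)
  ultimately show ?thesis by simp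
qed

section \<open>Bias bound\<close>

lemma sq_add_le_weighted:
  fixes a b \<eta> :: real
  assumes "0 < \<eta>"
  shows "(a + b)^2 \<le> (1 + \<eta>) * b^2 + (1 + 1 / \<eta>) * a^2"
proof -
  have "0 \<le> (\<eta> * b - a)^2 / \<eta>" using assms by simp
  also have "\<dots> = \<eta> * b^2 - 2 * a * b + a^2 / \<eta>"
    using assms by (simp add: power2_eq_square field_simps)
  finally show ?thesis by (simp add: power2_eq_square algebra_simps)
qed

lemma powr_add_eq:
  fixes x a b c :: real
  assumes "a + b = c"
  shows "x powr a * x powr b = x powr c"
  unfolding assms[symmetric] by (rule powr_add[symmetric])

lemma sq_mult_powr_ratio:
  fixes x W c \<beta> :: real
  assumes "0 < x" "0 < W" "0 < c"
  shows "(c * x)^2 * (x / W) powr (2 * \<beta> - 2) = (c * W) powr (2 - 2 * \<beta>) * (c * x) powr (2 * \<beta>)"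
proof -
  have "(x / W) powr (2 * \<beta> - 2) = ((c * x) / (c * W)) powr (2 * \<beta> - 2)"
    using assms by simp
  also have "\<dots> = (c * x) powr (2 * \<beta> - 2) / (c * W) powr (2 * \<beta> - 2)"
    by (rule powr_divide)
  also have "\<dots> = (c * x) powr (2 * \<beta> - 2) * (c * W) powr (2 - 2 * \<beta>)"
    using powr_minus_divide[of "c * W" "2 * \<beta> - 2"] by (simp add: divide_inverse)
  finally have "(x / W) powr (2 * \<beta> - 2) = (c * x) powr (2 * \<beta> - 2) * (c * W) powr (2 - 2 * \<beta>)" .
  moreover have "(c * x)^2 * (c * x) powr (2 * \<beta> - 2) = (c * x) powr (2 * \<beta>)"
    using assms by (simp add: powr_add[symmetric] flip: powr_numeral)
  ultimately show ?thesis by (simp add: algebra_simps)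
qed

lemma powr_le_powr_mult_powr:
  fixes c y \<beta> \<beta>s :: real
  assumes "\<beta> < \<beta>s" "0 < c" "c \<le> y"
  shows "y powr (2 * \<beta>) \<le> c powr (2 * \<beta> - 2 * \<beta>s) * y powr (2 * \<beta>s)"
proof -
  have "y powr (2 * \<beta>) = y powr (2 * \<beta> - 2 * \<beta>s) * y powr (2 * \<beta>s)"
    by (simp add: powr_add[symmetric])
  also have "\<dots> \<le> c powr (2 * \<beta> - 2 * \<beta>s) * y powr (2 * \<beta>s)"
    using assms by (intro mult_right_mono powr_mono2') auto
  finally show ?thesis .
qed

lemma bias_term_le:
  assumes "\<beta> < \<beta>s" "0 < W" "0 < \<gamma>" "0 < \<eta>"
  shows "(2 * pi * real k)^2 * ((1 - pinsker_filter \<beta> W \<gamma> k)^2 * (a + b)^2)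
    \<le> (2 * pi * W) powr (2 - 2 * \<beta>) * ((1 + \<eta>) * ((2 * pi * real k) powr (2 * \<beta>) * b^2)
      + (1 + 1 / \<eta>) * ((2 * pi * \<gamma> * W) powr (2 * \<beta> - 2 * \<beta>s)
        * ((2 * pi * real k) powr (2 * \<beta>s) * a^2)))"
proof (cases "real k \<le> \<gamma> * W")
  case True
  then show ?thesis using assms by (simp add: pinsker_filter_def)
next
  case False
  define y where "y = 2 * pi * real k"
  have "0 < \<gamma> * W" using assms by simp
  then have k0: "0 < real k" using False by linarith
  have "y^2 * ((1 - pinsker_filter \<beta> W \<gamma> k)^2 * (a + b)^2)
      \<le> y^2 * ((real k / W) powr (2 * \<beta> - 2) * (a + b)^2)"
    using False by (intro mult_left_mono mult_right_mono one_minus_pinsker_filter_sq_le) auto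
  also have "\<dots> = (2 * pi * W) powr (2 - 2 * \<beta>) * y powr (2 * \<beta>) * (a + b)^2"
    using sq_mult_powr_ratio[OF k0 assms(2), of "2 * pi" \<beta>] by (simp add: y_def)
  also have "\<dots> \<le> (2 * pi * W) powr (2 - 2 * \<beta>) * y powr (2 * \<beta>)
      * ((1 + \<eta>) * b^2 + (1 + 1 / \<eta>) * a^2)"
    using assms by (intro mult_left_mono sq_add_le_weighted) auto
  also have "\<dots> = (2 * pi * W) powr (2 - 2 * \<beta>)
      * ((1 + \<eta>) * (y powr (2 * \<beta>) * b^2) + (1 + 1 / \<eta>) * (y powr (2 * \<beta>) * a^2))"
    by (simp add: algebra_simps)
  also have "\<dots> \<le> (2 * pi * W) powr (2 - 2 * \<beta>) * ((1 + \<eta>) * (y powr (2 * \<beta>) * b^2)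
      + (1 + 1 / \<eta>) * ((2 * pi * \<gamma> * W) powr (2 * \<beta> - 2 * \<beta>s) * (y powr (2 * \<beta>s) * a^2)))"
  proof -
    have "y powr (2 * \<beta>) * a^2 \<le> (2 * pi * \<gamma> * W) powr (2 * \<beta> - 2 * \<beta>s) * y powr (2 * \<beta>s) * a^2"
      using assms False
      by (intro mult_right_mono powr_le_powr_mult_powr) (auto simp: y_def)
    then show ?thesis using assms by (intro mult_left_mono add_left_mono) (auto simp: mult.assoc)
  qed
  finally show ?thesis by (simp add: y_def)
qed

lemma bias_risk_pinsker_filter_le:
  assumes "\<beta> < \<beta>s" "0 < W" "0 < \<gamma>" "0 < \<eta>" "0 \<le> L"
    and "loc_sq_int fbar" "sob_sq \<beta>s fbar \<le> ennreal (Ls^2)"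
    and "loc_sq_int v" "sob_sq \<beta> v \<le> ennreal L"
  shows "bias_risk (\<lambda>t. fbar t + v t) (pinsker_filter \<beta> W \<gamma>)
    \<le> ennreal ((2 * pi * W) powr (2 - 2 * \<beta>)
        * ((1 + \<eta>) * L + (1 + 1 / \<eta>) * (2 * pi * \<gamma> * W) powr (2 * \<beta> - 2 * \<beta>s) * Ls^2))"
proof -
  define c1 where "c1 = (2 * pi * W) powr (2 - 2 * \<beta>) * (1 + \<eta>)"
  define c2 where
    "c2 = (2 * pi * W) powr (2 - 2 * \<beta>) * (1 + 1 / \<eta>) * (2 * pi * \<gamma> * W) powr (2 * \<beta> - 2 * \<beta>s)"
  define SB where "SB k = (2 * pi * real (Suc k)) powr (2 * \<beta>) * (coef v (Suc k))^2" for k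
  define SA where "SA k = (2 * pi * real (Suc k)) powr (2 * \<beta>s) * (coef fbar (Suc k))^2" for k
  have c: "0 \<le> c1" "0 \<le> c2" using assms by (auto simp: c1_def c2_def)
  have "bias_risk (\<lambda>t. fbar t + v t) (pinsker_filter \<beta> W \<gamma>)
      \<le> (\<Sum>k. ennreal c1 * ennreal (SB k) + ennreal c2 * ennreal (SA k))"
    unfolding bias_risk_def coef_add[OF assms(6,8)]
  proof (intro suminf_le summableI)
    fix k
    have "ennreal ((2 * pi * real (Suc k))^2 * ((1 - pinsker_filter \<beta> W \<gamma> (Suc k))^2
          * (coef fbar (Suc k) + coef v (Suc k))^2)) \<le> ennreal (c1 * SB k + c2 * SA k)"
      using bias_term_le[OF assms(1-4), of "Suc k" "coef fbar (Suc k)" "coef v (Suc k)"]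
      by (intro ennreal_leI) (simp add: c1_def c2_def SA_def SB_def algebra_simps)
    also have "ennreal (c1 * SB k + c2 * SA k)
        = ennreal c1 * ennreal (SB k) + ennreal c2 * ennreal (SA k)"
      using c by (simp add: SA_def SB_def ennreal_mult)
    finally show "ennreal ((2 * pi * real (Suc k))^2 * ((1 - pinsker_filter \<beta> W \<gamma> (Suc k))^2
          * (coef fbar (Suc k) + coef v (Suc k))^2))
        \<le> ennreal c1 * ennreal (SB k) + ennreal c2 * ennreal (SA k)" .
  qed
  also have "\<dots> = ennreal c1 * sob_sq \<beta> v + ennreal c2 * sob_sq \<beta>s fbar"
    unfolding sob_sq_def SA_def SB_def by (subst suminf_add[symmetric]) auto
  also have "\<dots> \<le> ennreal c1 * ennreal L + ennreal c2 * ennreal (Ls^2)"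
    using assms by (intro add_mono mult_left_mono) auto
  also have "\<dots> = ennreal ((2 * pi * W) powr (2 - 2 * \<beta>)
        * ((1 + \<eta>) * L + (1 + 1 / \<eta>) * (2 * pi * \<gamma> * W) powr (2 * \<beta> - 2 * \<beta>s) * Ls^2))"
    using c assms by (simp add: ennreal_mult[symmetric] c1_def c2_def algebra_simps)
  finally show ?thesis .
qed

section \<open>Variance bound\<close>

lemma sum_le_antiderivative_diff:
  fixes F F' :: "real \<Rightarrow> real" and g :: "nat \<Rightarrow> real"
  assumes cont: "continuous_on {0..real n} F"
    and deriv: "\<And>x. 0 < x \<Longrightarrow> x < real n \<Longrightarrow> (F has_real_derivative F' x) (at x)"
    and bound: "\<And>k x. k < n \<Longrightarrow> real k < x \<Longrightarrow> x < real (Suc k) \<Longrightarrow> g (Suc k) \<le> F' x"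
  shows "(\<Sum>k<n. g (Suc k)) \<le> F (real n) - F 0"
proof -
  have step: "g (Suc k) \<le> F (real (Suc k)) - F (real k)" if k: "k < n" for k
  proof -
    define \<phi> where "\<phi> x = F x - g (Suc k) * x" for x
    have "\<phi> (real k) \<le> \<phi> (real (Suc k))"
    proof (rule DERIV_nonneg_imp_increasing_open[of "real k" "real (Suc k)"])
      show "real k \<le> real (Suc k)" by simp
      have "continuous_on {real k..real (Suc k)} F"
        using k by (intro continuous_on_subset[OF cont]) auto
      then show "continuous_on {real k..real (Suc k)} \<phi>"
        unfolding \<phi>_def by (intro continuous_intros)
      fix x assume x: "real k < x" "x < real (Suc k)"
      have "(\<phi> has_real_derivative F' x - g (Suc k)) (at x)"
        unfolding \<phi>_def using x k
        by (auto intro!: derivative_eq_intros deriv)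
      then show "\<exists>y. (\<phi> has_real_derivative y) (at x) \<and> 0 \<le> y"
        using bound[OF k x] by auto
    qed
    then show ?thesis by (simp add: \<phi>_def algebra_simps)
  qed
  have "(\<Sum>k<n. g (Suc k)) \<le> (\<Sum>k<n. F (real (Suc k)) - F (real k))"
    using step by (intro sum_mono) auto
  also have "\<dots> = F (real n) - F 0"
    using sum_lessThan_telescope[of "\<lambda>k. F (real k)" n] by simp
  finally show ?thesis .
qed

text \<open>An antiderivative of x^2 h(x)^2 + 2x + 1, where h is the taper; since h decreases on
  [0, W], this dominates (k+1)^2 h(k+1)^2 on (k, k+1).\<close>

definition taper_primitive :: "real \<Rightarrow> real \<Rightarrow> real \<Rightarrow> real" where
  "taper_primitive \<beta> W x = x^3 / 3 - 2 * W powr (1 - \<beta>) * x powr (\<beta> + 2) / (\<beta> + 2)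
      + W powr (2 - 2 * \<beta>) * x powr (2 * \<beta> + 1) / (2 * \<beta> + 1) + x^2 + x"

lemma sq_mult_pinsker_taper_sq:
  assumes "0 < W" "0 < x"
  shows "x^2 * (pinsker_taper \<beta> W x)^2
    = x^2 - 2 * W powr (1 - \<beta>) * x powr (\<beta> + 1) + W powr (2 - 2 * \<beta>) * x powr (2 * \<beta>)"
proof -
  have "(x / W) powr (\<beta> - 1) = W powr (1 - \<beta>) * x powr (\<beta> - 1)"
    using assms by (simp add: powr_divide powr_minus_divide[of W "\<beta> - 1", simplified])
  then have "x^2 * (pinsker_taper \<beta> W x)^2 = x^2 - 2 * W powr (1 - \<beta>) * (x^2 * x powr (\<beta> - 1))
      + (W powr (1 - \<beta>))^2 * (x^2 * (x powr (\<beta> - 1))^2)"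
    by (simp add: pinsker_taper_def power2_eq_square algebra_simps)
  moreover have "x^2 = x powr 2" using assms by simp
  then have "x^2 * x powr (\<beta> - 1) = x powr (\<beta> + 1)"
    by (simp only:) (rule powr_add_eq, simp)
  moreover have "(x powr (\<beta> - 1))^2 = x powr (2 * \<beta> - 2)"
    unfolding power2_eq_square by (rule powr_add_eq) simp
  with \<open>x^2 = x powr 2\<close> have "x^2 * (x powr (\<beta> - 1))^2 = x powr (2 * \<beta>)"
    by (simp only:) (rule powr_add_eq, simp)
  moreover have "(W powr (1 - \<beta>))^2 = W powr (2 - 2 * \<beta>)"
    unfolding power2_eq_square by (rule powr_add_eq) simp
  ultimately show ?thesis by simp
qed

lemma taper_primitive_has_derivative:
  assumes "1 < \<beta>" "0 < W" "0 < x"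
  shows "(taper_primitive \<beta> W has_real_derivative
    x^2 * (pinsker_taper \<beta> W x)^2 + 2 * x + 1) (at x)"
proof -
  have "((\<lambda>z. z powr (\<beta> + 2)) has_real_derivative (\<beta> + 2) * x powr (\<beta> + 1)) (at x)"
    using has_real_derivative_powr[OF assms(3), of "\<beta> + 2"] by (simp add: add_ac)
  moreover have "((\<lambda>z. z powr (2 * \<beta> + 1)) has_real_derivative (2 * \<beta> + 1) * x powr (2 * \<beta>)) (at x)"
    using has_real_derivative_powr[OF assms(3), of "2 * \<beta> + 1"] by simp
  ultimately show ?thesis
    unfolding taper_primitive_def sq_mult_pinsker_taper_sq[OF assms(2,3)] using assms
    by (auto intro!: derivative_eq_intros simp: power2_eq_square add_ac)
qed

lemma taper_primitive_continuous:
  assumes "1 < \<beta>"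
  shows "continuous_on {0..} (taper_primitive \<beta> W)"
proof -
  have powr: "continuous_on {0..} (\<lambda>x::real. x powr c)" if "0 < c" for c
    using that by (intro continuous_on_powr'[where f = "\<lambda>x. x"]) (auto intro: continuous_intros)
  show ?thesis
    unfolding taper_primitive_def using assms
    by (intro continuous_on_add continuous_on_diff continuous_on_mult continuous_on_divide
        continuous_on_const continuous_on_power continuous_on_id powr) auto
qed

lemma taper_primitive_mono:
  assumes "1 < \<beta>" "0 < W" "0 \<le> a" "a \<le> b"
  shows "taper_primitive \<beta> W a \<le> taper_primitive \<beta> W b"
proof (rule DERIV_nonneg_imp_increasing_open[OF assms(4)])
  show "continuous_on {a..b} (taper_primitive \<beta> W)"
    using assms by (intro continuous_on_subset[OF taper_primitive_continuous]) auto
  fix x assume "a < x" "x < b"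
  then have "0 < x" using assms by linarith
  from taper_primitive_has_derivative[OF assms(1,2) this]
  show "\<exists>y. (taper_primitive \<beta> W has_real_derivative y) (at x) \<and> 0 \<le> y"
    using \<open>0 < x\<close> by (intro exI[of _ "x^2 * (pinsker_taper \<beta> W x)^2 + 2 * x + 1"]) simp
qed

lemma taper_primitive_at_W:
  assumes "1 < \<beta>" "0 < W"
  shows "taper_primitive \<beta> W W = 2 * (\<beta> - 1)^2 / (3 * (\<beta> + 2) * (2 * \<beta> + 1)) * W^3 + W^2 + W"
proof -
  have "W powr (1 - \<beta>) * W powr (\<beta> + 2) = W^3" "W powr (2 - 2 * \<beta>) * W powr (2 * \<beta> + 1) = W^3"
    using assms by (simp_all add: powr_add_eq flip: powr_numeral)
  then show ?thesis
    using assms by (simp add: taper_primitive_def field_simps power2_eq_square)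
qed

lemma sum_sq_taper_sq_le:
  assumes "1 < \<beta>" "0 < W" "real n \<le> W"
  shows "(\<Sum>k<n. (real (Suc k))^2 * (pinsker_taper \<beta> W (real (Suc k)))^2)
    \<le> 2 * (\<beta> - 1)^2 / (3 * (\<beta> + 2) * (2 * \<beta> + 1)) * W^3 + W^2 + W"
proof -
  have "(\<Sum>k<n. (real (Suc k))^2 * (pinsker_taper \<beta> W (real (Suc k)))^2)
      \<le> taper_primitive \<beta> W (real n) - taper_primitive \<beta> W 0"
  proof (rule sum_le_antiderivative_diff)
    show "continuous_on {0..real n} (taper_primitive \<beta> W)"
      using assms by (intro continuous_on_subset[OF taper_primitive_continuous]) auto
    show "(taper_primitive \<beta> W has_real_derivative
        x^2 * (pinsker_taper \<beta> W x)^2 + 2 * x + 1) (at x)" if "0 < x" for x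
      using taper_primitive_has_derivative[OF assms(1,2) that] .
    fix k x assume k: "k < n" and x: "real k < x" "x < real (Suc k)"
    define h where "h = pinsker_taper \<beta> W (real (Suc k))"
    have "real (Suc k) \<le> W" using k assms by linarith
    then have h: "0 \<le> h" "h \<le> pinsker_taper \<beta> W x" "pinsker_taper \<beta> W x \<le> 1"
      using x assms pinsker_taper_nonneg pinsker_taper_antimono pinsker_taper_le_one
      by (auto simp: h_def)
    have "(real (Suc k))^2 * h^2 \<le> (x + 1)^2 * (pinsker_taper \<beta> W x)^2"
      using x h by (intro mult_mono power_mono) auto
    also have "\<dots> \<le> x^2 * (pinsker_taper \<beta> W x)^2 + 2 * x + 1"
    proof -
      have "(2 * x + 1) * (pinsker_taper \<beta> W x)^2 \<le> 2 * x + 1"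
        using h x by (intro mult_left_le) (auto intro: power_le_one)
      then show ?thesis by (simp add: power2_eq_square algebra_simps)
    qed
    finally show "(real (Suc k))^2 * h^2 \<le> x^2 * (pinsker_taper \<beta> W x)^2 + 2 * x + 1" .
  qed
  also have "\<dots> \<le> taper_primitive \<beta> W W"
    using assms by (simp add: taper_primitive_def[of _ _ 0] taper_primitive_mono)
  finally show ?thesis using taper_primitive_at_W[OF assms(1,2)] by simp
qed

lemma sum_sq_upto_le_cube:
  fixes c :: real
  assumes "0 \<le> c"
  shows "(\<Sum>k<n. if real (Suc k) \<le> c then (real (Suc k))^2 else 0) \<le> c^3"
proof -
  define K where "K = {k \<in> {..<n}. real (Suc k) \<le> c}"
  have "(\<Sum>k<n. if real (Suc k) \<le> c then (real (Suc k))^2 else 0) = (\<Sum>k\<in>K. (real (Suc k))^2)"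
    unfolding K_def by (rule sum.inter_filter[symmetric]) simp
  also have "\<dots> \<le> (\<Sum>k\<in>K. c^2)"
    by (intro sum_mono power_mono) (auto simp: K_def)
  also have "\<dots> = real (card K) * c^2" by simp
  also have "\<dots> \<le> c * c^2"
  proof -
    have "K \<subseteq> {..<nat \<lfloor>c\<rfloor>}"
    proof
      fix k assume "k \<in> K"
      then have "Suc k \<le> nat \<lfloor>c\<rfloor>" unfolding K_def by (intro le_nat_floor) simp
      then show "k \<in> {..<nat \<lfloor>c\<rfloor>}" by simp
    qed
    then have "real (card K) \<le> real (nat \<lfloor>c\<rfloor>)"
      by (metis card_lessThan card_mono finite_lessThan of_nat_le_iff)
    also have "\<dots> \<le> c" using assms by linarith
    finally show ?thesis by (intro mult_right_mono) auto
  qed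
  finally show ?thesis by (simp add: power2_eq_square power3_eq_cube)
qed

lemma var_risk_pinsker_filter_le:
  assumes "1 < \<beta>" "0 < W" "0 < \<gamma>" "\<gamma> < 1"
  shows "var_risk \<epsilon> (pinsker_filter \<beta> W \<gamma>) \<le> ennreal (\<epsilon>^2 * (2 * pi)^2
    * (2 * (\<beta> - 1)^2 / (3 * (\<beta> + 2) * (2 * \<beta> + 1)) * W^3 + W^2 + W + (\<gamma> * W)^3))"
proof -
  define n where "n = nat \<lfloor>W\<rfloor>"
  have nW: "real n \<le> W" using assms by (simp add: n_def)
  define lam where "lam = pinsker_filter \<beta> W \<gamma>"
  define h where "h k = pinsker_taper \<beta> W (real k)" for k
  have "var_risk \<epsilon> lam = ennreal (\<Sum>k<n. (2 * pi * real (Suc k))^2 * (\<epsilon>^2 * (lam (Suc k))^2))"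
  proof (rule var_risk_eq_sum)
    fix k assume "n < k"
    then have "W < real k" using assms by (simp add: n_def nat_less_iff floor_less_iff)
    then show "lam k = 0" using pinsker_filter_eq_0 assms by (simp add: lam_def)
  qed
  also have "(\<Sum>k<n. (2 * pi * real (Suc k))^2 * (\<epsilon>^2 * (lam (Suc k))^2))
      \<le> \<epsilon>^2 * (2 * pi)^2 * ((\<Sum>k<n. (real (Suc k))^2 * (h (Suc k))^2)
        + (\<Sum>k<n. if real (Suc k) \<le> \<gamma> * W then (real (Suc k))^2 else 0))"
  proof -
    have "real (Suc k) \<le> W" if "k < n" for k using that nW by linarith
    then have "(\<Sum>k<n. (real (Suc k))^2 * (lam (Suc k))^2)
        \<le> (\<Sum>k<n. (real (Suc k))^2 * (h (Suc k))^2)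
          + (\<Sum>k<n. if real (Suc k) \<le> \<gamma> * W then (real (Suc k))^2 else 0)"
      unfolding sum.distrib[symmetric] lam_def h_def
      by (intro sum_mono sq_mult_pinsker_filter_sq_le assms) simp
    moreover have "(\<Sum>k<n. (2 * pi * real (Suc k))^2 * (\<epsilon>^2 * (lam (Suc k))^2))
        = \<epsilon>^2 * (2 * pi)^2 * (\<Sum>k<n. (real (Suc k))^2 * (lam (Suc k))^2)"
      unfolding sum_distrib_left by (rule sum.cong) (simp_all add: power_mult_distrib)
    ultimately show ?thesis by (simp add: mult_left_mono)
  qed
  also have "\<dots> \<le> \<epsilon>^2 * (2 * pi)^2
      * (2 * (\<beta> - 1)^2 / (3 * (\<beta> + 2) * (2 * \<beta> + 1)) * W^3 + W^2 + W + (\<gamma> * W)^3)"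
    using sum_sq_taper_sq_le[OF assms(1,2) nW] sum_sq_upto_le_cube[of "\<gamma> * W" n] assms
    by (intro mult_left_mono) (auto simp: h_def)
  finally show ?thesis by (simp add: lam_def ennreal_leI)
qed

lemma risk_pinsker_filter_le:
  assumes "1 < \<beta>" "\<beta> < \<beta>s" "0 < W" "0 < \<gamma>" "\<gamma> < 1" "0 < \<eta>" "0 \<le> L"
    and "loc_sq_int fbar" "sob_sq \<beta>s fbar \<le> ennreal (Ls^2)"
    and "loc_sq_int v" "sob_sq \<beta> v \<le> ennreal L"
  shows "risk \<epsilon> (\<lambda>t. fbar t + v t) (pinsker_filter \<beta> W \<gamma>)
    \<le> ennreal ((2 * pi * W) powr (2 - 2 * \<beta>)
          * ((1 + \<eta>) * L + (1 + 1 / \<eta>) * (2 * pi * \<gamma> * W) powr (2 * \<beta> - 2 * \<beta>s) * Ls^2)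
        + \<epsilon>^2 * (2 * pi)^2
          * (2 * (\<beta> - 1)^2 / (3 * (\<beta> + 2) * (2 * \<beta> + 1)) * W^3 + W^2 + W + (\<gamma> * W)^3))"
proof -
  have "0 \<le> 2 * (\<beta> - 1)^2 / (3 * (\<beta> + 2) * (2 * \<beta> + 1))" using assms by simp
  then show ?thesis
    unfolding risk_eq_bias_risk_plus_var_risk
    using bias_risk_pinsker_filter_le[OF assms(2-4,6-11)] var_risk_pinsker_filter_le[OF assms(1,3-5)]
      assms by (subst ennreal_plus) (auto intro!: add_mono)
qed

section \<open>The bandwidth and the constant\<close>

lemma W_eps_pos:
  assumes "1 < \<beta>" "0 < L" "0 < \<epsilon>"
  shows "0 < W_eps \<beta> L \<epsilon>"
  using assms by (simp add: W_eps_def)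

lemma W_eps_scaled_powr:
  assumes "1 < \<beta>" "0 < L" "0 < \<epsilon>"
  shows "(2 * pi * W_eps \<beta> L \<epsilon>) powr (2 * \<beta> + 1)
    = 2 * pi * (L * (\<beta> + 2) * (2 * \<beta> + 1) / (\<beta> - 1)) / \<epsilon>^2"
proof -
  define X where "X = L / \<epsilon>^2 * ((\<beta> + 2) * (2 * \<beta> + 1)) / ((2 * pi) powr (2 * \<beta>) * (\<beta> - 1))"
  have "0 < X" using assms by (simp add: X_def)
  moreover have "W_eps \<beta> L \<epsilon> = X powr (1 / (2 * \<beta> + 1))"
    by (simp add: W_eps_def X_def)
  ultimately have "W_eps \<beta> L \<epsilon> powr (2 * \<beta> + 1) = X"
    using assms by (simp add: powr_powr)
  moreover have "(2 * pi) powr (2 * \<beta> + 1) = 2 * pi * (2 * pi) powr (2 * \<beta>)"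
    by (simp add: powr_add)
  ultimately have "(2 * pi * W_eps \<beta> L \<epsilon>) powr (2 * \<beta> + 1) = 2 * pi * ((2 * pi) powr (2 * \<beta>) * X)"
    by (simp add: powr_mult del: powr_gt_zero)
  also have "(2 * pi) powr (2 * \<beta>) * X = L * (\<beta> + 2) * (2 * \<beta> + 1) / (\<beta> - 1) / \<epsilon>^2"
    using assms by (simp add: X_def field_simps)
  finally show ?thesis by simp
qed

lemma eps_sq_W_eps_cube:
  assumes "1 < \<beta>" "0 < L" "0 < \<epsilon>"
  shows "\<epsilon>^2 * (2 * pi)^2 * (W_eps \<beta> L \<epsilon>)^3
    = L * (\<beta> + 2) * (2 * \<beta> + 1) / (\<beta> - 1) * (2 * pi * W_eps \<beta> L \<epsilon>) powr (2 - 2 * \<beta>)"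
    (is "?lhs = ?K * _")
proof -
  define w where "w = 2 * pi * W_eps \<beta> L \<epsilon>"
  have "0 < w" using W_eps_pos[OF assms] by (simp add: w_def)
  have "2 * pi * ?lhs = \<epsilon>^2 * w^3"
    by (simp add: w_def power_mult_distrib power2_eq_square power3_eq_cube)
  also have "\<dots> = \<epsilon>^2 * w powr (2 * \<beta> + 1) * w powr (2 - 2 * \<beta>)"
    using \<open>0 < w\<close> by (simp add: powr_add_eq mult.assoc flip: powr_numeral)
  also have "\<dots> = 2 * pi * (?K * w powr (2 - 2 * \<beta>))"
    using W_eps_scaled_powr[OF assms] assms by (simp add: w_def)
  finally show ?thesis unfolding w_def by (subst (asm) mult_cancel_left) simp
qed

lemma C_const_mult_eps_powr:
  assumes "1 < \<beta>" "0 < L" "0 < \<epsilon>"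
  shows "C_const \<beta> L * \<epsilon> powr ((4 * \<beta> - 4) / (2 * \<beta> + 1))
    = (2 * pi * W_eps \<beta> L \<epsilon>) powr (2 - 2 * \<beta>) * ((2 * \<beta> + 1) / 3 * L)"
    (is "?lhs = ?rhs")
proof -
  define w where "w = 2 * pi * W_eps \<beta> L \<epsilon>"
  have w0: "0 < w" using W_eps_pos[OF assms] by (simp add: w_def)
  have "(2 * \<beta> + 1) * ln w = ln (2 * pi * (L * (\<beta> + 2) * (2 * \<beta> + 1) / (\<beta> - 1)) / \<epsilon>^2)"
    using W_eps_scaled_powr[OF assms] w0 by (simp add: w_def ln_powr[symmetric])
  also have "\<dots> = ln 2 + ln pi + ln L + ln (\<beta> + 2) + ln (2 * \<beta> + 1) - ln (\<beta> - 1) - 2 * ln \<epsilon>"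
    using assms by (simp add: ln_mult ln_div ln_realpow)
  finally have lnw: "(2 * \<beta> + 1) * ln w
      = ln 2 + ln pi + ln L + ln (\<beta> + 2) + ln (2 * \<beta> + 1) - ln (\<beta> - 1) - 2 * ln \<epsilon>" .
  have ln_lhs: "ln ?lhs = - ln 3 + (2 * \<beta> - 2) / (2 * \<beta> + 1) * (ln (\<beta> - 1) - ln 2 - ln pi - ln (\<beta> + 2))
        + 3 / (2 * \<beta> + 1) * (ln L + ln (2 * \<beta> + 1)) + (4 * \<beta> - 4) / (2 * \<beta> + 1) * ln \<epsilon>"
    using assms by (simp add: C_const_def ln_mult ln_div ln_powr)
  have "(2 * \<beta> + 1) * ln ?lhs
      = - (2 * \<beta> + 1) * ln 3 + (2 * \<beta> - 2) * (ln (\<beta> - 1) - ln 2 - ln pi - ln (\<beta> + 2))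
        + 3 * (ln L + ln (2 * \<beta> + 1)) + (4 * \<beta> - 4) * ln \<epsilon>"
  proof -
    have cancel: "(2 * \<beta> + 1) * (x / (2 * \<beta> + 1) * y) = x * y" for x y
      using assms by simp
    show ?thesis unfolding ln_lhs by (simp only: distrib_left cancel)
  qed
  also have "\<dots> = (2 - 2 * \<beta>) * ((2 * \<beta> + 1) * ln w) + (2 * \<beta> + 1) * (ln (2 * \<beta> + 1) - ln 3 + ln L)"
    unfolding lnw by (simp add: algebra_simps)
  also have "\<dots> = (2 * \<beta> + 1) * ln ?rhs"
  proof -
    have "ln ?rhs = (2 - 2 * \<beta>) * ln w + ln (2 * \<beta> + 1) - ln 3 + ln L"
      using assms w0 unfolding w_def[symmetric] by (simp add: ln_mult ln_div ln_powr)
    then show ?thesis by (simp only:) (simp add: algebra_simps)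
  qed
  finally have "ln ?lhs = ln ?rhs" using assms by simp
  moreover have "0 < ?lhs" "0 < ?rhs"
    using assms W_eps_pos[OF assms] by (simp_all add: C_const_def)
  ultimately show ?thesis by simp
qed

lemma variance_bound_W_eps_eq:
  assumes "1 < \<beta>" "0 < L" "0 < \<epsilon>"
  defines "W \<equiv> W_eps \<beta> L \<epsilon>"
  shows "\<epsilon>^2 * (2 * pi)^2 * (2 * (\<beta> - 1)^2 / (3 * (\<beta> + 2) * (2 * \<beta> + 1)) * W^3 + W^2 + W + (\<gamma> * W)^3)
    = (2 * pi * W) powr (2 - 2 * \<beta>)
      * ((2 * \<beta> - 2) / 3 * L + L * (\<beta> + 2) * (2 * \<beta> + 1) / (\<beta> - 1) * (1 / W + 1 / W^2 + \<gamma>^3))"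
proof -
  define K where "K = L * (\<beta> + 2) * (2 * \<beta> + 1) / (\<beta> - 1)"
  define c where "c = 2 * (\<beta> - 1)^2 / (3 * (\<beta> + 2) * (2 * \<beta> + 1))"
  have "0 < W" using W_eps_pos[OF assms(1-3)] by (simp add: W_def)
  then have "\<epsilon>^2 * (2 * pi)^2 * (c * W^3 + W^2 + W + (\<gamma> * W)^3)
      = \<epsilon>^2 * (2 * pi)^2 * W^3 * (c + 1 / W + 1 / W^2 + \<gamma>^3)"
    by (simp add: field_simps power2_eq_square power3_eq_cube)
  also have "\<dots> = K * (2 * pi * W) powr (2 - 2 * \<beta>) * (c + 1 / W + 1 / W^2 + \<gamma>^3)"
    by (simp only: W_def eps_sq_W_eps_cube[OF assms(1-3)] K_def)
  also have "\<dots> = (2 * pi * W) powr (2 - 2 * \<beta>) * (K * c + K * (1 / W + 1 / W^2 + \<gamma>^3))"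
    by (simp add: algebra_simps)
  also have "K * c = (2 * \<beta> - 2) / 3 * L"
    using assms unfolding K_def c_def
    by (simp add: power2_eq_square divide_simps) (simp add: algebra_simps)
  finally show ?thesis by (simp only: K_def c_def)
qed

lemma gamma_eps_bounds:
  assumes "0 < \<epsilon>" "\<epsilon> < exp (-1)"
  shows "0 < gamma_eps \<epsilon>" "gamma_eps \<epsilon> < 1"
proof -
  have "ln \<epsilon> < ln (exp (-1))" using assms by (intro ln_less_cancel_iff[THEN iffD2]) auto
  then have "ln \<epsilon> < -1" by simp
  then have "1 < -2 * ln \<epsilon>" by simp
  moreover have "gamma_eps \<epsilon> = 1 / (-2 * ln \<epsilon>)"
    using assms by (simp add: gamma_eps_def ln_powr)
  ultimately show "0 < gamma_eps \<epsilon>" "gamma_eps \<epsilon> < 1"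
    by (simp_all only: divide_less_eq_1_pos zero_less_divide_1_iff)
qed

section \<open>Asymptotics\<close>

text \<open>The terms of the risk bound that are negligible against (2\<pi>W)^(2-2\<beta>): the bias of fbar
  above the cut-off and the lower-order variance terms.\<close>

definition lam_star_remainder :: "real \<Rightarrow> real \<Rightarrow> real \<Rightarrow> real \<Rightarrow> real \<Rightarrow> real \<Rightarrow> real" where
  "lam_star_remainder \<beta> \<beta>s L Ls \<eta> \<epsilon> =
    (1 + 1 / \<eta>) * Ls^2 * (2 * pi * gamma_eps \<epsilon> * W_eps \<beta> L \<epsilon>) powr (2 * \<beta> - 2 * \<beta>s)
    + L * (\<beta> + 2) * (2 * \<beta> + 1) / (\<beta> - 1)
      * (1 / W_eps \<beta> L \<epsilon> + 1 / (W_eps \<beta> L \<epsilon>)^2 + (gamma_eps \<epsilon>)^3)"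

lemma sup_risk_lam_star_le:
  assumes "1 < \<beta>" "\<beta> < \<beta>s" "0 < L" "fbar \<in> Fclass \<beta>s Ls \<rho>"
    and "0 < \<epsilon>" "\<epsilon> < exp (-1)" "0 < \<eta>"
  shows "(SUP f\<in>Fball r \<beta> L fbar. risk \<epsilon> f (lam_star \<beta> L \<epsilon>))
    \<le> ennreal ((2 * pi * W_eps \<beta> L \<epsilon>) powr (2 - 2 * \<beta>)
        * ((2 * \<beta> + 1) / 3 * L + \<eta> * L + lam_star_remainder \<beta> \<beta>s L Ls \<eta> \<epsilon>))"
proof -
  define W where "W = W_eps \<beta> L \<epsilon>"
  define \<gamma> where "\<gamma> = gamma_eps \<epsilon>"
  have W: "0 < W" using W_eps_pos assms by (simp add: W_def)
  have \<gamma>: "0 < \<gamma>" "\<gamma> < 1" using gamma_eps_bounds assms by (simp_all add: \<gamma>_def)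
  have fbar: "loc_sq_int fbar" "sob_sq \<beta>s fbar \<le> ennreal (Ls^2)"
    using assms(4) by (simp_all add: Fclass_def F0_def)
  have "(SUP f\<in>Fball r \<beta> L fbar. risk \<epsilon> f (lam_star \<beta> L \<epsilon>))
      \<le> ennreal ((2 * pi * W) powr (2 - 2 * \<beta>)
          * ((1 + \<eta>) * L + (1 + 1 / \<eta>) * (2 * pi * \<gamma> * W) powr (2 * \<beta> - 2 * \<beta>s) * Ls^2)
        + \<epsilon>^2 * (2 * pi)^2
          * (2 * (\<beta> - 1)^2 / (3 * (\<beta> + 2) * (2 * \<beta> + 1)) * W^3 + W^2 + W + (\<gamma> * W)^3))"
    (is "_ \<le> ennreal ?bound")
  proof (rule SUP_least)
    fix f assume "f \<in> Fball r \<beta> L fbar"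
    then obtain v where "f = (\<lambda>t. fbar t + v t)" "loc_sq_int v" "sob_sq \<beta> v \<le> ennreal L"
      by (auto simp: Fball_def)
    then show "risk \<epsilon> f (lam_star \<beta> L \<epsilon>) \<le> ennreal ?bound"
      using risk_pinsker_filter_le[OF assms(1,2) W \<gamma> assms(7) _ fbar] assms(3)
      by (simp add: lam_star_eq_pinsker_filter W_def \<gamma>_def)
  qed
  also have "?bound = (2 * pi * W) powr (2 - 2 * \<beta>)
      * ((2 * \<beta> + 1) / 3 * L + \<eta> * L + lam_star_remainder \<beta> \<beta>s L Ls \<eta> \<epsilon>)"
    unfolding variance_bound_W_eps_eq[OF assms(1,3,5), folded W_def]
    by (simp add: lam_star_remainder_def W_def[symmetric] \<gamma>_def[symmetric] field_simps)
  finally show ?thesis by (simp add: W_def)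
qed

lemma W_eps_tendsto_top:
  assumes "1 < \<beta>" "0 < L"
  shows "filterlim (W_eps \<beta> L) at_top (at_right 0)"
  using assms unfolding W_eps_def by real_asymp

lemma gamma_eps_tendsto_0: "(gamma_eps \<longlongrightarrow> 0) (at_right 0)"
  unfolding gamma_eps_def by real_asymp

lemma gamma_eps_mult_W_eps_tendsto_top:
  assumes "1 < \<beta>" "0 < L"
  shows "filterlim (\<lambda>\<epsilon>. gamma_eps \<epsilon> * W_eps \<beta> L \<epsilon>) at_top (at_right 0)"
  using assms unfolding W_eps_def gamma_eps_def by real_asymp

lemma lam_star_remainder_tendsto_0:
  assumes "1 < \<beta>" "\<beta> < \<beta>s" "0 < L"
  shows "(lam_star_remainder \<beta> \<beta>s L Ls \<eta> \<longlongrightarrow> 0) (at_right 0)"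
proof -
  have "((\<lambda>\<epsilon>. (2 * pi * gamma_eps \<epsilon> * W_eps \<beta> L \<epsilon>) powr (2 * \<beta> - 2 * \<beta>s)) \<longlongrightarrow> 0) (at_right 0)"
  proof (rule tendsto_neg_powr)
    show "filterlim (\<lambda>\<epsilon>. 2 * pi * gamma_eps \<epsilon> * W_eps \<beta> L \<epsilon>) at_top (at_right 0)"
      using filterlim_tendsto_pos_mult_at_top[OF tendsto_const _
          gamma_eps_mult_W_eps_tendsto_top[OF assms(1,3)], of "2 * pi"]
      by (simp add: mult.assoc)
  qed (use assms in simp)
  moreover have W: "((\<lambda>\<epsilon>. 1 / W_eps \<beta> L \<epsilon>) \<longlongrightarrow> 0) (at_right 0)"
    using tendsto_inverse_0_at_top[OF W_eps_tendsto_top[OF assms(1,3)]] by (simp add: divide_inverse)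
  moreover have "((\<lambda>\<epsilon>. 1 / (W_eps \<beta> L \<epsilon>)^2) \<longlongrightarrow> 0) (at_right 0)"
    using tendsto_power[OF W, of 2] by (simp add: power_one_over)
  ultimately have "(lam_star_remainder \<beta> \<beta>s L Ls \<eta> \<longlongrightarrow>
      (1 + 1 / \<eta>) * Ls^2 * 0 + L * (\<beta> + 2) * (2 * \<beta> + 1) / (\<beta> - 1) * (0 + 0^2 + 0^3)) (at_right 0)"
    unfolding lam_star_remainder_def
    by (intro tendsto_intros gamma_eps_tendsto_0) simp_all
  then show ?thesis by simp
qed

lemma eventually_sup_risk_lam_star_le:
  assumes "1 < \<beta>" "\<beta> < \<beta>s" "0 < L" "fbar \<in> Fclass \<beta>s Ls \<rho>" "0 < \<delta>"
  shows "\<forall>\<^sub>F \<epsilon> in at_right 0. (SUP f\<in>Fball r \<beta> L fbar. risk \<epsilon> f (lam_star \<beta> L \<epsilon>))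
    \<le> ennreal ((1 + \<delta>) * ((2 * pi * W_eps \<beta> L \<epsilon>) powr (2 - 2 * \<beta>) * ((2 * \<beta> + 1) / 3 * L)))"
proof -
  define \<eta> where "\<eta> = \<delta> / 2"
  define A where "A = (2 * \<beta> + 1) / 3 * L"
  have "0 < \<eta>" using assms by (simp add: \<eta>_def)
  have "1 * L \<le> (2 * \<beta> + 1) / 3 * L" using assms by (intro mult_right_mono) auto
  then have "\<delta> * L \<le> \<delta> * A" using assms by (intro mult_left_mono) (auto simp: A_def)
  moreover have "\<delta> * L = 2 * (\<eta> * L)" by (simp add: \<eta>_def)
  ultimately have A: "A + \<eta> * L + x \<le> (1 + \<delta>) * A" if "x < \<eta> * L" for x
    using that by (simp add: distrib_right)
  have "\<forall>\<^sub>F \<epsilon> in at_right 0. lam_star_remainder \<beta> \<beta>s L Ls \<eta> \<epsilon> < \<eta> * L"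
    using order_tendstoD(2)[OF lam_star_remainder_tendsto_0[OF assms(1-3)]] \<open>0 < \<eta>\<close> assms(3)
    by simp
  moreover have "\<forall>\<^sub>F \<epsilon> in at_right (0::real). \<epsilon> \<in> {0<..<exp (-1)}"
    by (rule eventually_at_right_real) simp
  ultimately show ?thesis
  proof eventually_elim
    case (elim \<epsilon>)
    define w where "w = (2 * pi * W_eps \<beta> L \<epsilon>) powr (2 - 2 * \<beta>)"
    have "(SUP f\<in>Fball r \<beta> L fbar. risk \<epsilon> f (lam_star \<beta> L \<epsilon>))
        \<le> ennreal (w * (A + \<eta> * L + lam_star_remainder \<beta> \<beta>s L Ls \<eta> \<epsilon>))"
      using sup_risk_lam_star_le[OF assms(1-4) _ _ \<open>0 < \<eta>\<close>] elim by (simp add: w_def A_def)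
    also have "\<dots> \<le> ennreal (w * ((1 + \<delta>) * A))"
      using A[OF elim(1)] by (intro ennreal_leI mult_left_mono) (simp_all add: w_def)
    finally show ?case by (simp add: w_def A_def mult.left_commute)
  qed
qed

theorem mainTheorem12:
  fixes \<beta> \<beta>s L Ls \<rho> r :: real and fbar :: "real \<Rightarrow> real"
  assumes "1 < \<beta>" "\<beta> < \<beta>s" "L > 0" "Ls > 0" "\<rho> > 0"
    and "fbar \<in> Fclass \<beta>s Ls \<rho>" and "r > 0"
  shows "\<forall>\<delta>>0. \<forall>\<^sub>F \<epsilon> in at_right 0.
     (SUP f\<in>Fball r \<beta> L fbar. risk \<epsilon> f (lam_star \<beta> L \<epsilon>))
       \<le> ennreal ((1 + \<delta>) * C_const \<beta> L * \<epsilon> powr ((4 * \<beta> - 4) / (2 * \<beta> + 1)))"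
proof (intro allI impI)
  fix \<delta> :: real assume "\<delta> > 0"
  have "\<forall>\<^sub>F \<epsilon> in at_right (0::real). 0 < \<epsilon>" by (rule eventually_at_right_less)
  with eventually_sup_risk_lam_star_le[OF assms(1-3,6) \<open>\<delta> > 0\<close>]
  show "\<forall>\<^sub>F \<epsilon> in at_right 0. (SUP f\<in>Fball r \<beta> L fbar. risk \<epsilon> f (lam_star \<beta> L \<epsilon>))
      \<le> ennreal ((1 + \<delta>) * C_const \<beta> L * \<epsilon> powr ((4 * \<beta> - 4) / (2 * \<beta> + 1)))"
    by eventually_elim (simp add: C_const_mult_eps_powr assms mult.assoc)
qed

end
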